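(* Let $a\in L_{1,\mathrm{loc}}(\mathbb C^d)$ be not a.e. zero, and suppose there is $c>0$ such that $|a(z)|e^{-|z|^2}=O(e^{-c|z|})$ as $|z|\to\infty$. Then the Toeplitz operator $T_a$ on the Fock space $\mathcal F^2(\mathbb C^d)$ defined by the form $\mathbf F_a(u,v)=\pi^{-d}\int_{\mathbb C^d}a(z)u(z)\overline{v(z)}e^{-|z|^2}dV(z)$ is not the zero operator; more precisely, there exist multi-indices $\alpha,\beta\in\mathbb Z_+^d$ such that $\int_{\mathbb C^d}a(z)z^\alpha\bar z^\beta e^{-|z|^2}\,dV(z)\ne0$.
   Context: $dV$ is Lebesgue measure on $\mathbb C^d\cong\mathbb R^{2d}$. The Fock space $\mathcal F^2(\mathbb C^d)$ consists of entire functions $u$ on $\mathbb C^d$ with $\pi^{-d}\int_{\mathbb C^d}|u(z)|^2e^{-|z|^2}dV(z)<\infty$; its monomials $z^\alpha$ span a dense subspace. For multi-indices, $z^\alpha=z_1^{\alpha_1}\cdots z_d^{\alpha_d}$. The Toeplitz operator $T_a$ is the operator with $\langle T_au,v\rangle=\mathbf F_a(u,v)$ on those $u,v$ (e.g. polynomials) for which the integral converges. *)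

theory Defs
  imports "HOL-Analysis.Analysis"
begin

text \<open>Points of C^d are modelled as complex ^ 'd for a finite index type 'd
  (d = CARD('d)); lborel on this type is Lebesgue measure on R^(2d).\<close>

definition locally_integrable :: "(complex ^ 'd \<Rightarrow> complex) \<Rightarrow> bool" where
  "locally_integrable a \<longleftrightarrow> a \<in> borel_measurable lborel \<and>
     (\<forall>K. compact K \<longrightarrow> set_integrable lborel K a)"

definition cmonom :: "('d \<Rightarrow> nat) \<Rightarrow> complex ^ 'd \<Rightarrow> complex" where
  "cmonom \<alpha> z = (\<Prod>i\<in>UNIV. (z $ i) ^ \<alpha> i)"

end

theory Submission
  imports Defs
begin

text \<open>
  Put f(z) = a(z) exp(-|z|^2). The decay hypothesis makes |f(z)| exp(c'|z|) (1 + |z|)^k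
  integrable for c' = c/2 and every k. If all moments of f against z^\<alpha> conj(z)^\<beta> vanished,
  then so would the integral of f q exp(i<s,z>) for every polynomial q in z and conj(z):
  for |t| \<le> c' the power series of exp(i<t,z>) has such polynomials as terms and partial sums
  dominated by exp(c'|z|), so vanishing passes from s to s + t, and any s is reached in
  finitely many such steps. Thus the integrable function f has vanishing Fourier transform,
  so f, and hence a, vanishes almost everywhere. Fourier uniqueness in turn follows by
  approximating the indicator of a box boundedly and pointwise by trigonometric polynomials
  and applying Lebesgue's differentiation theorem.
\<close>

section \<open>Trigonometric polynomials and uniqueness of the Fourier transform\<close>

inductive trig_poly :: "('a::real_inner \<Rightarrow> complex) \<Rightarrow> bool" where
  character: "trig_poly (\<lambda>x. exp (\<i> * complex_of_real (s \<bullet> x)))"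
| scale: "trig_poly f \<Longrightarrow> trig_poly (\<lambda>x. c * f x)"
| add: "trig_poly f \<Longrightarrow> trig_poly g \<Longrightarrow> trig_poly (\<lambda>x. f x + g x)"

lemma trig_poly_const: "trig_poly (\<lambda>x. c)"
  using trig_poly.scale[OF trig_poly.character[of 0], of c] by simp

lemma trig_poly_mult_character:
  "trig_poly f \<Longrightarrow> trig_poly (\<lambda>x. f x * exp (\<i> * complex_of_real (s \<bullet> x)))"
proof (induction rule: trig_poly.induct)
  case (character t)
  show ?case
    using trig_poly.character[of "t + s"]
    by (simp add: inner_add_left exp_add distrib_left)
qed (auto simp: distrib_right mult.assoc intro: trig_poly.intros)

lemma trig_poly_mult:
  assumes "trig_poly f" and "trig_poly g" shows "trig_poly (\<lambda>x. f x * g x)"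
  using assms(2)
proof (induction rule: trig_poly.induct)
  case (scale g c)
  then show ?case using trig_poly.scale[of _ c] by (simp add: mult.left_commute)
qed (auto simp: distrib_left intro: trig_poly.intros trig_poly_mult_character assms(1))

lemma trig_poly_prod:
  "finite I \<Longrightarrow> (\<And>i. i \<in> I \<Longrightarrow> trig_poly (f i)) \<Longrightarrow> trig_poly (\<lambda>x. \<Prod>i\<in>I. f i x)"
  by (induction I rule: finite_induct) (auto intro: trig_poly_const trig_poly_mult)

lemma trig_poly_compose_inner:
  "trig_poly (h :: real \<Rightarrow> complex) \<Longrightarrow> trig_poly (\<lambda>x. h (x \<bullet> b))"
proof (induction rule: trig_poly.induct)
  case (character s)
  show ?case using trig_poly.character[of "s *\<^sub>R b"] by (simp add: inner_commute)
qed (auto intro: trig_poly.intros)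

lemma trig_poly_sin: "trig_poly (\<lambda>y::real. complex_of_real (sin (\<theta> * y)))"
proof -
  have "complex_of_real (sin (\<theta> * y)) =
      (- \<i> / 2) * exp (\<i> * complex_of_real (\<theta> \<bullet> y)) + (\<i> / 2) * exp (\<i> * complex_of_real ((- \<theta>) \<bullet> y))" for y
    by (simp add: sin_of_real[symmetric] sin_exp_eq field_simps)
  then show ?thesis by (simp only: trig_poly.intros)
qed

lemma trig_poly_real_polynomial_compose:
  assumes "real_polynomial_function g" and "trig_poly (\<lambda>x. complex_of_real (u x))"
  shows "trig_poly (\<lambda>x. complex_of_real (g (u x)))"
  using assms(1)
proof (induction rule: real_polynomial_function.induct)
  case (linear g)
  then obtain c where "g = (\<lambda>t. t * c)" by (auto simp: real_bounded_linear)
  then show ?case using trig_poly.scale[OF assms(2), of c] by (simp add: mult.commute)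
qed (auto intro: trig_poly.intros trig_poly_const trig_poly_mult)

lemma continuous_on_trig_poly: "trig_poly f \<Longrightarrow> continuous_on S f"
  by (induction rule: trig_poly.induct) (auto intro!: continuous_intros)

lemma integral_trig_poly_eq_0:
  fixes f :: "'a::euclidean_space \<Rightarrow> complex"
  assumes f: "integrable lborel f"
    and fourier: "\<And>s. (LINT x|lborel. f x * exp (\<i> * complex_of_real (s \<bullet> x))) = 0"
    and "trig_poly g"
  shows "integrable lborel (\<lambda>x. f x * g x) \<and> (LINT x|lborel. f x * g x) = 0"
  using \<open>trig_poly g\<close>
proof (induction rule: trig_poly.induct)
  case (character s)
  have [measurable]: "f \<in> borel_measurable lborel" using f by (rule borel_measurable_integrable)
  have "integrable lborel (\<lambda>x. f x * exp (\<i> * complex_of_real (s \<bullet> x)))"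
    by (rule Bochner_Integration.integrable_bound[OF integrable_norm[OF f]]) (auto simp: norm_mult)
  then show ?case using fourier by simp
next
  case (scale g c)
  then show ?case by (simp add: mult.left_commute)
qed (simp add: distrib_left)

lemma tendsto_infdist_cutoff_indicator:
  fixes S :: "'a::metric_space set"
  assumes "closed S" "S \<noteq> {}"
  shows "(\<lambda>n. max 0 (1 - real n * infdist x S)) \<longlonglongrightarrow> indicator S x"
proof (cases "x \<in> S")
  case True
  then show ?thesis by simp
next
  case False
  then have d: "infdist x S > 0" using assms by (intro infdist_pos_not_in_closed)
  have "\<forall>\<^sub>F n in sequentially. 1 / infdist x S \<le> real n"
    by (rule eventually_ge_at_top[THEN eventually_mono, of "nat \<lceil>1 / infdist x S\<rceil>"]) linarith
  then have "\<forall>\<^sub>F n in sequentially. max 0 (1 - real n * infdist x S) = 0"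
    by eventually_elim (use d in \<open>auto simp: field_simps\<close>)
  then show ?thesis using False by (simp add: tendsto_eventually)
qed

lemma trig_poly_approx_indicator:
  fixes S :: "real set"
  assumes "closed S"
  obtains T where "\<And>n. trig_poly (T n)" "\<And>n y. norm (T n y) \<le> 2"
    "\<And>y. (\<lambda>n. T n y) \<longlonglongrightarrow> complex_of_real (indicator S y)"
proof (cases "S = {}")
  case True
  then show ?thesis by (intro that[of "\<lambda>n y. 0"]) (auto intro: trig_poly_const)
next
  case False
  txt \<open>\<open>G n\<close> is continuous on [-1,1], so it is close to a polynomial \<open>g n\<close> there; then
    \<open>g n (sin (y / (n + 1)))\<close> is a trigonometric polynomial in \<open>y\<close>, bounded on all of \<open>\<real>\<close>,
    and for fixed \<open>y\<close> eventually \<open>arcsin (sin (y / (n + 1))) = y / (n + 1)\<close>.\<close>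
  define G where "G n t = max 0 (1 - real n * infdist (arcsin t * (real n + 1)) S)" for n t
  have "\<exists>g. real_polynomial_function g \<and> (\<forall>t\<in>{-1..1}. \<bar>G n t - g t\<bar> < 1 / (real n + 1))" for n
  proof -
    have "continuous_on {-1..1} (G n)"
      unfolding G_def by (intro continuous_intros) auto
    moreover have "0 < 1 / (real n + 1)" by simp
    ultimately obtain g where "real_polynomial_function g" "\<And>x. x \<in> {-1..1} \<Longrightarrow> \<bar>G n x - g x\<bar> < 1 / (real n + 1)"
      by (rule Stone_Weierstrass_real_polynomial_function[OF compact_Icc]) blast
    then show ?thesis by blast
  qed
  then obtain g where g: "\<And>n. real_polynomial_function (g n)"
    and approx: "\<And>n t. t \<in> {-1..1} \<Longrightarrow> \<bar>G n t - g n t\<bar> < 1 / (real n + 1)"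
    by metis
  have lim_inverse: "(\<lambda>n. 1 / (real n + 1)) \<longlonglongrightarrow> 0"
    using LIMSEQ_inverse_real_of_nat by (simp add: inverse_eq_divide add.commute)
  define T where "T n y = complex_of_real (g n (sin (y / (real n + 1))))" for n y
  show ?thesis
  proof (rule that)
    show "trig_poly (T n)" for n
      unfolding T_def using trig_poly_real_polynomial_compose[OF g trig_poly_sin, of n "1 / (real n + 1)"]
      by simp
    show "norm (T n y) \<le> 2" for n y
    proof -
      let ?t = "sin (y / (real n + 1))"
      have "\<bar>G n ?t\<bar> \<le> 1" unfolding G_def by (simp add: infdist_nonneg)
      moreover have "\<bar>G n ?t - g n ?t\<bar> < 1 / (real n + 1)"
        by (rule approx) simp
      moreover have "1 / (real n + 1) \<le> 1" by simp
      ultimately show ?thesis unfolding T_def norm_of_real by linarith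
    qed
    show "(\<lambda>n. T n y) \<longlonglongrightarrow> complex_of_real (indicator S y)" for y
    proof -
      have "(\<lambda>n. \<bar>y\<bar> * (1 / (real n + 1))) \<longlonglongrightarrow> \<bar>y\<bar> * 0"
        by (intro tendsto_intros lim_inverse)
      then have "\<forall>\<^sub>F n in sequentially. \<bar>y\<bar> * (1 / (real n + 1)) < pi / 2"
        by (rule order_tendstoD) simp
      then have "\<forall>\<^sub>F n in sequentially. arcsin (sin (y / (real n + 1))) = y / (real n + 1)"
        by eventually_elim (rule arcsin_sin; simp add: abs_less_iff field_simps)
      then have "\<forall>\<^sub>F n in sequentially. max 0 (1 - real n * infdist y S) = G n (sin (y / (real n + 1)))"
        by eventually_elim (simp add: G_def)
      then have cutoff: "(\<lambda>n. G n (sin (y / (real n + 1)))) \<longlonglongrightarrow> indicator S y"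
        by (rule Lim_transform_eventually[OF tendsto_infdist_cutoff_indicator[OF assms False]])
      have "(\<lambda>n. g n (sin (y / (real n + 1))) - G n (sin (y / (real n + 1)))) \<longlonglongrightarrow> 0"
      proof (rule Lim_null_comparison)
        show "\<forall>\<^sub>F n in sequentially. norm (g n (sin (y / (real n + 1))) - G n (sin (y / (real n + 1))))
            \<le> 1 / (real n + 1)"
          using approx by (intro always_eventually allI) (simp add: abs_minus_commute less_imp_le)
      qed (rule lim_inverse)
      from tendsto_add[OF this cutoff] show ?thesis
        unfolding T_def by (intro tendsto_of_real) simp
    qed
  qed
qed

lemma integral_indicator_cbox_eq_0:
  fixes f :: "'a::euclidean_space \<Rightarrow> complex"
  assumes f: "integrable lborel f"
    and fourier: "\<And>s. (LINT x|lborel. f x * exp (\<i> * complex_of_real (s \<bullet> x))) = 0"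
  shows "(LINT x|lborel. indicator (cbox u v) x *\<^sub>R f x) = 0"
proof -
  have "\<exists>T. (\<forall>n. trig_poly (T n)) \<and> (\<forall>n y. norm (T n y) \<le> 2) \<and>
      (\<forall>y. (\<lambda>n. T n y) \<longlonglongrightarrow> complex_of_real (indicator {u \<bullet> b..v \<bullet> b} y))" for b
    by (rule trig_poly_approx_indicator[of "{u \<bullet> b..v \<bullet> b}"]) auto
  then obtain T where T: "\<And>b n. trig_poly (T b n)" "\<And>b n y. norm (T b n y) \<le> 2"
    "\<And>b y. (\<lambda>n. T b n y) \<longlonglongrightarrow> complex_of_real (indicator {u \<bullet> b..v \<bullet> b} y)"
    by metis
  define P where "P n x = (\<Prod>b\<in>Basis. T b n (x \<bullet> b))" for n x
  have P: "trig_poly (P n)" for n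
    unfolding P_def by (intro trig_poly_prod trig_poly_compose_inner T) auto
  have [measurable]: "f \<in> borel_measurable lborel" "P n \<in> borel_measurable lborel" for n
    using f P[of n] by (auto intro: borel_measurable_continuous_onI continuous_on_trig_poly)
  have "(\<lambda>n. LINT x|lborel. f x * P n x) \<longlonglongrightarrow> (LINT x|lborel. indicator (cbox u v) x *\<^sub>R f x)"
  proof (rule integral_dominated_convergence[where w="\<lambda>x. 2 ^ DIM('a) * norm (f x)"])
    show "integrable lborel (\<lambda>x. 2 ^ DIM('a) * norm (f x))" using f by simp
    show "AE x in lborel. (\<lambda>n. f x * P n x) \<longlonglongrightarrow> indicator (cbox u v) x *\<^sub>R f x"
    proof (intro AE_I2)
      fix x :: 'a
      have "indicator (cbox u v) x = (\<Prod>b\<in>Basis. indicator {u \<bullet> b..v \<bullet> b} (x \<bullet> b) :: real)"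
        by (auto simp: cbox_def indicator_def prod.neutral)
      moreover have "(\<lambda>n. P n x) \<longlonglongrightarrow> (\<Prod>b\<in>Basis. complex_of_real (indicator {u \<bullet> b..v \<bullet> b} (x \<bullet> b)))"
        unfolding P_def by (intro tendsto_prod T)
      ultimately show "(\<lambda>n. f x * P n x) \<longlonglongrightarrow> indicator (cbox u v) x *\<^sub>R f x"
        by (auto intro: tendsto_mult_left simp: scaleR_conv_of_real mult.commute)
    qed
    show "AE x in lborel. norm (f x * P n x) \<le> 2 ^ DIM('a) * norm (f x)" for n
    proof (intro AE_I2)
      fix x :: 'a
      have "norm (P n x) \<le> (\<Prod>b\<in>(Basis::'a set). 2)"
        unfolding P_def prod_norm[symmetric] by (intro prod_mono) (auto simp: T(2))
      then show "norm (f x * P n x) \<le> 2 ^ DIM('a) * norm (f x)"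
        by (simp add: norm_mult mult.commute mult_left_mono)
    qed
  qed (measurable)
  moreover have "(LINT x|lborel. f x * P n x) = 0" for n
    using integral_trig_poly_eq_0[OF f fourier P] by blast
  ultimately show ?thesis by (simp add: LIMSEQ_const_iff)
qed

theorem fourier_transform_eq_0_imp_AE_zero:
  fixes f :: "'a::euclidean_space \<Rightarrow> complex"
  assumes f: "integrable lborel f"
    and fourier: "\<And>s. (LINT x|lborel. f x * exp (\<i> * complex_of_real (s \<bullet> x))) = 0"
  shows "AE x in lborel. f x = 0"
proof -
  have box: "set_integrable lborel (cbox u v) f" for u v
    unfolding set_integrable_def by (rule integrable_mult_indicator) (use f in auto)
  have zero: "integral (cbox u v) f = 0" for u v
    using set_borel_integral_eq_integral(2)[OF box] integral_indicator_cbox_eq_0[OF f fourier]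
    by (simp add: set_lebesgue_integral_def)
  have "f integrable_on cbox u v" for u v
    using set_borel_integral_eq_integral(1)[OF box] .
  then obtain N where N: "negligible N"
    "\<And>x e. \<lbrakk>x \<notin> N; 0 < e\<rbrakk> \<Longrightarrow> \<exists>d>0. \<forall>h. 0 < h \<and> h < d \<longrightarrow>
         norm (integral (cbox x (x + h *\<^sub>R One)) f /\<^sub>R h ^ DIM('a) - f x) < e"
    using integrable_ccontinuous_explicit by blast
  txt \<open>Off \<open>N\<close>, \<open>f x\<close> is the limit of averages over small cubes, all of which vanish.\<close>
  have "f x = 0" if x: "x \<notin> N" for x
  proof (rule ccontr)
    assume "f x \<noteq> 0"
    then obtain d where "d > 0"
      "\<forall>h. 0 < h \<and> h < d \<longrightarrow> norm (integral (cbox x (x + h *\<^sub>R One)) f /\<^sub>R h ^ DIM('a) - f x) < norm (f x)"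
      using N(2)[OF x, of "norm (f x)"] by auto
    with zero show False by (auto dest: spec[of _ "d / 2"])
  qed
  moreover have "N \<in> null_sets lebesgue" using N(1) negligible_iff_null_sets by blast
  ultimately have "AE x in lebesgue. f x = 0"
    by (auto intro: AE_I'[of N])
  then show ?thesis by (simp add: AE_completion_iff)
qed

section \<open>Polynomials in \<open>z\<close> and its conjugate\<close>

inductive zzbar_poly :: "(complex ^ 'd \<Rightarrow> complex) \<Rightarrow> bool" where
  monomial: "zzbar_poly (\<lambda>z. cmonom \<alpha> z * cnj (cmonom \<beta> z))"
| scale: "zzbar_poly p \<Longrightarrow> zzbar_poly (\<lambda>z. c * p z)"
| add: "zzbar_poly p \<Longrightarrow> zzbar_poly q \<Longrightarrow> zzbar_poly (\<lambda>z. p z + q z)"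

lemma zzbar_poly_one: "zzbar_poly (\<lambda>z. 1)"
  using zzbar_poly.monomial[of "\<lambda>_. 0" "\<lambda>_. 0"] by (simp add: cmonom_def)

lemma zzbar_poly_sum:
  "finite I \<Longrightarrow> (\<And>i. i \<in> I \<Longrightarrow> zzbar_poly (p i)) \<Longrightarrow> zzbar_poly (\<lambda>z. \<Sum>i\<in>I. p i z)"
proof (induction I rule: finite_induct)
  case empty
  then show ?case using zzbar_poly.scale[OF zzbar_poly_one, of 0] by simp
qed (auto intro: zzbar_poly.add)

lemma cmonom_fun_upd_Suc: "cmonom (\<alpha>(j := Suc (\<alpha> j))) z = z $ j * cmonom \<alpha> z"
proof -
  have "cmonom (\<alpha>(j := Suc (\<alpha> j))) z = (\<Prod>i\<in>UNIV. (z $ i) ^ \<alpha> i * (if i = j then z $ i else 1))"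
    unfolding cmonom_def by (intro prod.cong) auto
  then show ?thesis
    unfolding cmonom_def prod.distrib by (simp add: prod.delta mult.commute)
qed

lemma zzbar_poly_mult_coord: "zzbar_poly p \<Longrightarrow> zzbar_poly (\<lambda>z. z $ j * p z)"
proof (induction rule: zzbar_poly.induct)
  case (monomial \<alpha> \<beta>)
  show ?case
    using zzbar_poly.monomial[of "\<alpha>(j := Suc (\<alpha> j))" \<beta>] by (simp add: cmonom_fun_upd_Suc mult.assoc)
qed (auto simp: distrib_left mult.left_commute intro: zzbar_poly.intros)

lemma zzbar_poly_mult_cnj_coord: "zzbar_poly p \<Longrightarrow> zzbar_poly (\<lambda>z. cnj (z $ j) * p z)"
proof (induction rule: zzbar_poly.induct)
  case (monomial \<alpha> \<beta>)
  show ?case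
    using zzbar_poly.monomial[of \<alpha> "\<beta>(j := Suc (\<beta> j))"] by (simp add: cmonom_fun_upd_Suc mult_ac)
qed (auto simp: distrib_left mult.left_commute intro: zzbar_poly.intros)

lemma complex_of_real_inner: "complex_of_real (x \<bullet> y) = (cnj x * y + x * cnj y) / 2"
  by (simp add: complex_eq_iff inner_complex_def)

lemma zzbar_poly_mult_inner: "zzbar_poly p \<Longrightarrow> zzbar_poly (\<lambda>z. complex_of_real (s \<bullet> z) * p z)"
proof -
  assume p: "zzbar_poly p"
  have "complex_of_real (s \<bullet> z) * p z =
      (\<Sum>i\<in>UNIV. (cnj (s $ i) / 2) * (z $ i * p z) + (s $ i / 2) * (cnj (z $ i) * p z))" for z
    unfolding inner_vec_def of_real_sum sum_distrib_right complex_of_real_inner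
    by (intro sum.cong) (auto simp: algebra_simps)
  moreover have "zzbar_poly (\<lambda>z. \<Sum>i\<in>UNIV. (cnj (s $ i) / 2) * (z $ i * p z) + (s $ i / 2) * (cnj (z $ i) * p z))"
    by (intro zzbar_poly_sum zzbar_poly.add zzbar_poly.scale zzbar_poly_mult_coord zzbar_poly_mult_cnj_coord p) auto
  ultimately show ?thesis by simp
qed

lemma zzbar_poly_mult_inner_power:
  "zzbar_poly p \<Longrightarrow> zzbar_poly (\<lambda>z. complex_of_real (s \<bullet> z) ^ n * p z)"
  by (induction n) (auto simp: mult.assoc dest: zzbar_poly_mult_inner)

lemma norm_cmonom_le: "norm (cmonom \<alpha> z) \<le> (1 + norm z) ^ (\<Sum>i\<in>UNIV. \<alpha> i)"
proof -
  have "norm (cmonom \<alpha> z) = (\<Prod>i\<in>UNIV. norm (z $ i) ^ \<alpha> i)"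
    unfolding cmonom_def by (simp add: prod_norm[symmetric] norm_power)
  also have "\<dots> \<le> (\<Prod>i\<in>UNIV. (1 + norm z) ^ \<alpha> i)"
    using Finite_Cartesian_Product.norm_nth_le[of z] by (intro prod_mono conjI power_mono) (auto intro: add_increasing)
  also have "\<dots> = (1 + norm z) ^ (\<Sum>i\<in>UNIV. \<alpha> i)" by (simp add: power_sum)
  finally show ?thesis .
qed

lemma zzbar_poly_polynomial_growth:
  "zzbar_poly p \<Longrightarrow> \<exists>K\<ge>0. \<exists>m. \<forall>z. norm (p z) \<le> K * (1 + norm z) ^ m"
proof (induction rule: zzbar_poly.induct)
  case (monomial \<alpha> \<beta>)
  have "norm (cmonom \<alpha> z * cnj (cmonom \<beta> z)) \<le> (1 + norm z) ^ (sum \<alpha> UNIV + sum \<beta> UNIV)" for z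
    unfolding norm_mult complex_mod_cnj power_add by (intro mult_mono norm_cmonom_le) auto
  then show ?case by (intro exI[of _ 1]) auto
next
  case (scale p c)
  then obtain K m where "K \<ge> 0" "\<And>z. norm (p z) \<le> K * (1 + norm z) ^ m" by blast
  then have "norm (c * p z) \<le> (norm c * K) * (1 + norm z) ^ m" for z
    by (simp add: norm_mult mult.assoc mult_left_mono)
  then show ?case using \<open>K \<ge> 0\<close> by (intro exI[of _ "norm c * K"]) auto
next
  case (add p q)
  then obtain K L m n where KL: "K \<ge> 0" "L \<ge> 0"
    and "\<And>z. norm (p z) \<le> K * (1 + norm z) ^ m" "\<And>z. norm (q z) \<le> L * (1 + norm z) ^ n"
    by blast
  moreover have "(1 + norm z) ^ m \<le> (1 + norm z) ^ (m + n)" "(1 + norm z) ^ n \<le> (1 + norm z) ^ (m + n)"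
    for z :: "complex ^ 'a" by (auto intro: power_increasing)
  ultimately have "norm (p z + q z) \<le> (K + L) * (1 + norm z) ^ (m + n)" for z
    using norm_triangle_ineq[of "p z" "q z"] mult_left_mono[OF _ KL(1)] mult_left_mono[OF _ KL(2)]
    by (smt (verit, best) distrib_right)
  then show ?case using KL by (intro exI[of _ "K + L"]) auto
qed

lemma continuous_on_zzbar_poly: "zzbar_poly p \<Longrightarrow> continuous_on S p"
  by (induction rule: zzbar_poly.induct) (auto simp: cmonom_def[abs_def] intro!: continuous_intros)

section \<open>Vanishing of exponential moments\<close>

lemma zzbar_poly_mult_dominated:
  fixes f :: "complex ^ 'd \<Rightarrow> complex"
  assumes weights: "\<And>k. integrable lborel (\<lambda>z. norm (f z) * exp (c * norm z) * (1 + norm z) ^ k)"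
    and "zzbar_poly q"
  obtains w where "integrable lborel w"
    "\<And>z h. norm h \<le> exp (c * norm z) \<Longrightarrow> norm (f z * q z * h) \<le> w z"
proof -
  obtain K m where K: "K \<ge> 0" "\<And>z. norm (q z) \<le> K * (1 + norm z) ^ m"
    using zzbar_poly_polynomial_growth[OF \<open>zzbar_poly q\<close>] by blast
  show ?thesis
  proof (rule that)
    show "integrable lborel (\<lambda>z. K * (norm (f z) * exp (c * norm z) * (1 + norm z) ^ m))"
      using weights[of m] by simp
    show "norm (f z * q z * h) \<le> K * (norm (f z) * exp (c * norm z) * (1 + norm z) ^ m)"
      if "norm h \<le> exp (c * norm z)" for z h
    proof -
      have "norm (f z * q z * h) \<le> norm (f z) * (K * (1 + norm z) ^ m) * exp (c * norm z)"
        unfolding norm_mult using that K by (intro mult_mono mult_left_mono) auto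
      then show ?thesis by (simp add: mult_ac)
    qed
  qed
qed

lemma integrable_zzbar_poly_mult:
  fixes f :: "complex ^ 'd \<Rightarrow> complex"
  assumes weights: "\<And>k. integrable lborel (\<lambda>z. norm (f z) * exp (c * norm z) * (1 + norm z) ^ k)"
    and [measurable]: "f \<in> borel_measurable lborel" "h \<in> borel_measurable lborel"
    and "zzbar_poly q" and h: "\<And>z. norm (h z) \<le> exp (c * norm z)"
  shows "integrable lborel (\<lambda>z. f z * q z * h z)"
proof -
  obtain w where w: "integrable lborel w"
    "\<And>z h. norm h \<le> exp (c * norm z) \<Longrightarrow> norm (f z * q z * h) \<le> w z"
    using zzbar_poly_mult_dominated[OF weights \<open>zzbar_poly q\<close>] by blast
  have [measurable]: "q \<in> borel_measurable lborel"
    using continuous_on_zzbar_poly[OF \<open>zzbar_poly q\<close>] by (simp add: borel_measurable_continuous_onI)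
  show ?thesis
    by (rule Bochner_Integration.integrable_bound[OF w(1)])
      (use w(2)[OF h] in \<open>auto intro: order_trans[OF _ abs_ge_self]\<close>)
qed

lemma integral_zzbar_poly_eq_0:
  fixes f :: "complex ^ 'd \<Rightarrow> complex"
  assumes weights: "\<And>k. integrable lborel (\<lambda>z. norm (f z) * exp (c * norm z) * (1 + norm z) ^ k)"
    and [measurable]: "f \<in> borel_measurable lborel" and "c \<ge> 0"
    and moments: "\<And>\<alpha> \<beta>. (LINT z|lborel. f z * cmonom \<alpha> z * cnj (cmonom \<beta> z)) = 0"
    and "zzbar_poly q"
  shows "(LINT z|lborel. f z * q z) = 0"
proof -
  have "integrable lborel (\<lambda>z. f z * q z) \<and> (LINT z|lborel. f z * q z) = 0"
    using \<open>zzbar_poly q\<close>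
  proof (induction rule: zzbar_poly.induct)
    case (monomial \<alpha> \<beta>)
    have "integrable lborel (\<lambda>z. f z * (cmonom \<alpha> z * cnj (cmonom \<beta> z)) * 1)"
      using \<open>c \<ge> 0\<close> by (intro integrable_zzbar_poly_mult[OF weights] zzbar_poly.monomial) auto
    then show ?case using moments[of \<alpha> \<beta>] by (simp add: mult.assoc)
  qed (auto simp: distrib_left mult.left_commute)
  then show ?thesis ..
qed

lemma norm_partial_exp_le: "norm (\<Sum>n<N. z ^ n /\<^sub>R fact n) \<le> exp (norm (z::complex))"
proof -
  have "norm (\<Sum>n<N. z ^ n /\<^sub>R fact n) \<le> (\<Sum>n<N. norm z ^ n /\<^sub>R fact n)"
    by (rule norm_sum[THEN order_trans]) (simp add: norm_power)
  also have "\<dots> \<le> (\<Sum>n. norm z ^ n /\<^sub>R fact n)"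
    using exp_converges[of "norm z"] by (intro sum_le_suminf) (auto simp: sums_iff)
  also have "\<dots> = exp (norm z)"
    using exp_converges[of "norm z"] by (simp add: sums_iff)
  finally show ?thesis .
qed

lemma integral_zzbar_poly_character_shift:
  fixes f :: "complex ^ 'd \<Rightarrow> complex"
  assumes weights: "\<And>k. integrable lborel (\<lambda>z. norm (f z) * exp (c * norm z) * (1 + norm z) ^ k)"
    and [measurable]: "f \<in> borel_measurable lborel"
    and vanish: "\<And>q. zzbar_poly q \<Longrightarrow> (LINT z|lborel. f z * q z * exp (\<i> * complex_of_real (s \<bullet> z))) = 0"
    and t: "norm t \<le> c" and q: "zzbar_poly q"
  shows "(LINT z|lborel. f z * q z * exp (\<i> * complex_of_real ((s + t) \<bullet> z))) = 0"
proof -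
  txt \<open>The partial sums of the exponential series of \<open>exp (\<i> t\<bullet>z)\<close> are dominated by
    \<open>exp (c |z|)\<close>, and their terms are covered by the hypothesis at \<open>s\<close> because
    \<open>(t\<bullet>z)\<^sup>n q\<close> is again a polynomial in \<open>z\<close> and its conjugate.\<close>
  define E where "E N z = (\<Sum>n<N. (\<i> * complex_of_real (t \<bullet> z)) ^ n /\<^sub>R fact n)" for N z
  define g where "g N z = f z * q z * (exp (\<i> * complex_of_real (s \<bullet> z)) * E N z)" for N z
  obtain w where w: "integrable lborel w"
    "\<And>z h. norm h \<le> exp (c * norm z) \<Longrightarrow> norm (f z * q z * h) \<le> w z"
    using zzbar_poly_mult_dominated[OF weights q] by blast
  have [measurable]: "q \<in> borel_measurable lborel"
    using continuous_on_zzbar_poly[OF q] by (simp add: borel_measurable_continuous_onI)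
  have E_le: "norm (exp (\<i> * complex_of_real (s \<bullet> z)) * E N z) \<le> exp (c * norm z)" for N z
  proof -
    have "norm (E N z) \<le> exp \<bar>t \<bullet> z\<bar>"
      unfolding E_def using norm_partial_exp_le[where z="\<i> * complex_of_real (t \<bullet> z)"] by (simp add: norm_mult)
    also have "\<bar>t \<bullet> z\<bar> \<le> c * norm z"
      using Cauchy_Schwarz_ineq2[of t z] mult_right_mono[OF t norm_ge_zero[of z]] by linarith
    finally show ?thesis by (simp add: norm_mult)
  qed
  have g_eq_0: "(LINT z|lborel. g N z) = 0" for N
  proof -
    define u where "u n z = f z * (complex_of_real (t \<bullet> z) ^ n * q z) * exp (\<i> * complex_of_real (s \<bullet> z))" for n z
    have "integrable lborel (u n)" for n
      unfolding u_def using order_trans[OF norm_ge_zero t]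
      by (intro integrable_zzbar_poly_mult[OF weights] zzbar_poly_mult_inner_power q) auto
    moreover have "g N z = (\<Sum>n<N. (\<i> ^ n /\<^sub>R fact n) * u n z)" for z
      unfolding g_def E_def u_def
      by (simp add: sum_distrib_left power_mult_distrib scaleR_conv_of_real algebra_simps)
    moreover have "(LINT z|lborel. u n z) = 0" for n
      unfolding u_def by (rule vanish[OF zzbar_poly_mult_inner_power[OF q]])
    ultimately show ?thesis by simp
  qed
  have "(\<lambda>N. LINT z|lborel. g N z) \<longlonglongrightarrow> (LINT z|lborel. f z * q z * exp (\<i> * complex_of_real ((s + t) \<bullet> z)))"
  proof (rule integral_dominated_convergence[where w=w])
    show "AE z in lborel. (\<lambda>N. g N z) \<longlonglongrightarrow> f z * q z * exp (\<i> * complex_of_real ((s + t) \<bullet> z))"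
    proof (intro AE_I2)
      fix z
      have "(\<lambda>N. E N z) \<longlonglongrightarrow> exp (\<i> * complex_of_real (t \<bullet> z))"
        unfolding E_def using exp_converges by (simp add: sums_def)
      then show "(\<lambda>N. g N z) \<longlonglongrightarrow> f z * q z * exp (\<i> * complex_of_real ((s + t) \<bullet> z))"
        unfolding g_def by (auto intro!: tendsto_intros simp: inner_add_left distrib_left exp_add)
    qed
    show "AE z in lborel. norm (g N z) \<le> w z" for N
      unfolding g_def using w(2)[OF E_le] by simp
    show "g N \<in> borel_measurable lborel" for N unfolding g_def E_def by measurable
  qed (measurable, fact w(1))
  then show ?thesis using g_eq_0 by (simp add: LIMSEQ_const_iff)
qed

lemma integral_zzbar_poly_character_eq_0:
  fixes f :: "complex ^ 'd \<Rightarrow> complex"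
  assumes weights: "\<And>k. integrable lborel (\<lambda>z. norm (f z) * exp (c * norm z) * (1 + norm z) ^ k)"
    and [measurable]: "f \<in> borel_measurable lborel" and "c > 0"
    and moments: "\<And>q. zzbar_poly q \<Longrightarrow> (LINT z|lborel. f z * q z) = 0"
  shows "(LINT z|lborel. f z * exp (\<i> * complex_of_real (s \<bullet> z))) = 0"
proof -
  obtain N :: nat where N: "norm s / c < real N" using reals_Archimedean2 by blast
  moreover have "0 \<le> norm s / c" using \<open>c > 0\<close> by simp
  ultimately have "N > 0" by simp
  define t where "t = s /\<^sub>R real N"
  have t: "norm t \<le> c"
    using N \<open>N > 0\<close> \<open>c > 0\<close> by (simp add: t_def field_simps)
  have "zzbar_poly q \<Longrightarrow> (LINT z|lborel. f z * q z * exp (\<i> * complex_of_real ((real k *\<^sub>R t) \<bullet> z))) = 0"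
    for k q
  proof (induction k arbitrary: q)
    case 0
    then show ?case using moments by simp
  next
    case (Suc k)
    then show ?case
      using integral_zzbar_poly_character_shift[OF weights _ Suc.IH t Suc.prems]
      by (simp add: algebra_simps)
  qed
  from this[OF zzbar_poly_one, of N] show ?thesis
    using \<open>N > 0\<close> by (simp add: t_def)
qed

section \<open>Integrability from the decay hypothesis\<close>

lemma integrable_exp_neg_abs: "a > 0 \<Longrightarrow> integrable lborel (\<lambda>t::real. exp (- a * \<bar>t\<bar>))"
proof -
  assume a: "a > 0"
  define g where "g t = indicator {0..} t * exp (- a * t)" for t :: real
  have "(\<lambda>t. exp (- a * t)) absolutely_integrable_on {0::real..}"
    using integrable_on_exp_minus_to_infinity[OF a] by (rule nonnegative_absolutely_integrable_1) simp
  then have "integrable lebesgue g"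
    unfolding set_integrable_def g_def by (simp add: mult.commute)
  moreover have gm: "g \<in> borel_measurable lborel" unfolding g_def by measurable
  ultimately have g: "integrable lborel g"
    by (metis integrable_completion measurable_lborel1 measurable_lborel2)
  have "integrable lborel (\<lambda>t. g t + g (0 + (-1) * t))"
    using g lborel_integrable_real_affine[OF g, of "-1" 0] by simp
  then show ?thesis
    by (rule Bochner_Integration.integrable_bound) (auto simp: g_def indicator_def)
qed

lemma integrable_exp_neg_norm:
  assumes "d > 0"
  shows "integrable lborel (\<lambda>z::'a::euclidean_space. exp (- d * norm z))"
proof -
  define a where "a = d / DIM('a)"
  have a: "a > 0" unfolding a_def using assms by simp
  define P where "P z = (\<Prod>b\<in>(Basis::'a set). exp (- a * \<bar>z \<bullet> b\<bar>))" for z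
  have "(\<integral>\<^sup>+ z. ennreal (P z) \<partial>lborel) = (\<integral>\<^sup>+ z. (\<Prod>b\<in>Basis. ennreal (exp (- a * \<bar>(z::'a) \<bullet> b\<bar>))) \<partial>lborel)"
    unfolding P_def by (rule nn_integral_cong) (simp add: prod_ennreal)
  also have "\<dots> = (\<Prod>b\<in>(Basis::'a set). \<integral>\<^sup>+ t. ennreal (exp (- a * \<bar>t\<bar>)) \<partial>lborel)"
    by (rule nn_integral_lborel_prod[where f="\<lambda>b t. ennreal (exp (- a * \<bar>t\<bar>))"]) auto
  also have "\<dots> < \<infinity>"
    using integrableD(2)[OF integrable_exp_neg_abs[OF a]]
    by (simp add: power_less_top_ennreal top.not_eq_extremum)
  moreover have "P \<in> borel_measurable lborel" unfolding P_def by measurable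
  ultimately have "integrable lborel P"
    by (intro integrableI_nonneg) (auto simp: P_def prod_nonneg less_top)
  then show ?thesis
  proof (rule Bochner_Integration.integrable_bound)
    show "AE z in lborel. norm (exp (- d * norm z)) \<le> norm (P z)"
    proof (intro AE_I2)
      fix z :: 'a
      have "(\<Sum>b\<in>(Basis::'a set). \<bar>z \<bullet> b\<bar>) \<le> (\<Sum>b\<in>(Basis::'a set). norm z)"
        by (intro sum_mono Basis_le_norm)
      then have "a * (\<Sum>b\<in>(Basis::'a set). \<bar>z \<bullet> b\<bar>) \<le> d * norm z"
        using a by (simp add: a_def field_simps)
      then show "norm (exp (- d * norm z)) \<le> norm (P z)"
        by (simp add: P_def exp_sum[symmetric] sum_negf sum_distrib_left)
    qed
  qed measurable
qed

lemma power_div_fact_le_exp: "0 \<le> x \<Longrightarrow> x ^ n / fact n \<le> exp (x::real)"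
  using sum_le_suminf[OF summable_exp, of "{n}" x] by (simp add: exp_def field_simps)

lemma power_le_exp:
  fixes r d :: real
  assumes "d > 0" "r \<ge> 0"
  shows "(1 + r) ^ k \<le> fact k * exp d / d ^ k * exp (d * r)"
proof -
  have "(1 + r) ^ k = (d * (1 + r)) ^ k / fact k * fact k / d ^ k"
    using assms by (simp add: power_mult_distrib)
  also have "\<dots> \<le> exp (d * (1 + r)) * fact k / d ^ k"
    using assms by (intro divide_right_mono mult_right_mono power_div_fact_le_exp) auto
  also have "\<dots> = fact k * exp d / d ^ k * exp (d * r)"
    by (simp add: distrib_left exp_add)
  finally show ?thesis .
qed

lemma integrable_weighted_of_gaussian_decay:
  fixes a :: "complex ^ 'd \<Rightarrow> complex"
  assumes loc: "locally_integrable a" and "c > 0"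
    and decay: "\<And>z. norm z \<ge> R \<Longrightarrow> norm (a z) * exp (- (norm z)\<^sup>2) \<le> C * exp (- c * norm z)"
  shows "integrable lborel
    (\<lambda>z. norm (a z * complex_of_real (exp (- (norm z)\<^sup>2))) * exp (c / 2 * norm z) * (1 + norm z) ^ k)"
    (is "integrable lborel ?g")
proof -
  define r where "r = max R 0"
  define M where "M = exp (c / 2 * r) * (1 + r) ^ k"
  define K where "K = fact k * exp (c / 4) / (c / 4) ^ k"
  have [measurable]: "a \<in> borel_measurable lborel"
    using loc by (simp add: locally_integrable_def)
  have "integrable lborel (\<lambda>z. M * norm (indicator (cball 0 r) z *\<^sub>R a z) + \<bar>C\<bar> * K * exp (- (c / 4) * norm z))"
    using loc \<open>c > 0\<close> unfolding locally_integrable_def set_integrable_def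
    by (intro Bochner_Integration.integrable_add integrable_mult_right integrable_norm integrable_exp_neg_norm) auto
  then show ?thesis
  proof (rule Bochner_Integration.integrable_bound)
    show "AE z in lborel. norm (?g z) \<le>
        norm (M * norm (indicator (cball 0 r) z *\<^sub>R a z) + \<bar>C\<bar> * K * exp (- (c / 4) * norm z))"
    proof (intro AE_I2)
      fix z :: "complex ^ 'd"
      have nonneg: "0 \<le> M" "0 \<le> \<bar>C\<bar> * K * exp (- (c / 4) * norm z)"
        using \<open>c > 0\<close> by (auto simp: M_def K_def r_def)
      have "?g z \<le> M * norm (indicator (cball 0 r) z *\<^sub>R a z) + \<bar>C\<bar> * K * exp (- (c / 4) * norm z)"
      proof (cases "norm z \<le> r")
        case True
        have "?g z \<le> norm (a z) * exp (c / 2 * r) * (1 + r) ^ k"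
          using True \<open>c > 0\<close>
          by (intro mult_mono power_mono) (auto simp: norm_mult mult_left_le)
        also have "\<dots> = M * norm (indicator (cball 0 r) z *\<^sub>R a z)"
          using True by (simp add: M_def)
        finally show ?thesis using nonneg by linarith
      next
        case False
        then have "norm (a z) * exp (- (norm z)\<^sup>2) \<le> \<bar>C\<bar> * exp (- c * norm z)"
          using decay[of z] by (simp add: r_def order_trans[OF _ mult_right_mono[OF abs_ge_self]])
        moreover have "(1 + norm z) ^ k \<le> K * exp (c / 4 * norm z)"
          unfolding K_def using power_le_exp[of "c / 4" "norm z" k] \<open>c > 0\<close> by simp
        ultimately have "?g z \<le> \<bar>C\<bar> * exp (- c * norm z) * exp (c / 2 * norm z) * (K * exp (c / 4 * norm z))"
          by (intro mult_mono) (auto simp: norm_mult)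
        also have "\<dots> = \<bar>C\<bar> * K * exp (- (c / 4) * norm z)"
          by (simp add: mult_ac exp_add[symmetric] algebra_simps)
        finally show ?thesis using False by (simp add: indicator_def)
      qed
      then show "norm (?g z) \<le> norm (M * norm (indicator (cball 0 r) z *\<^sub>R a z) + \<bar>C\<bar> * K * exp (- (c / 4) * norm z))"
        by simp
    qed
  qed measurable
qed

theorem propositionA1:
  fixes a :: "complex ^ 'd \<Rightarrow> complex"
  assumes loc: "locally_integrable a"
    and nonzero: "\<not> (AE z in lborel. a z = 0)"
    and decay: "\<exists>c>0. \<exists>C R. \<forall>z::complex ^ 'd. norm z \<ge> R \<longrightarrow>
                  norm (a z) * exp (- (norm z)\<^sup>2) \<le> C * exp (- c * norm z)"
  shows "\<exists>\<alpha> \<beta> :: 'd \<Rightarrow> nat.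
           (LINT z|lborel. a z * cmonom \<alpha> z * cnj (cmonom \<beta> z)
                           * complex_of_real (exp (- (norm z)\<^sup>2))) \<noteq> 0"
proof (rule ccontr)
  assume "\<not> ?thesis"
  then have moments: "(LINT z|lborel. a z * cmonom \<alpha> z * cnj (cmonom \<beta> z)
                           * complex_of_real (exp (- (norm z)\<^sup>2))) = 0" for \<alpha> \<beta>
    by blast
  obtain c C R where "c > 0"
    and bound: "\<And>z. norm z \<ge> R \<Longrightarrow> norm (a z) * exp (- (norm z)\<^sup>2) \<le> C * exp (- c * norm z)"
    using decay by blast
  define f where "f z = a z * complex_of_real (exp (- (norm z)\<^sup>2))" for z
  have [measurable]: "a \<in> borel_measurable lborel"
    using loc by (simp add: locally_integrable_def)
  then have [measurable]: "f \<in> borel_measurable lborel"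
    unfolding f_def by measurable
  have weights: "integrable lborel (\<lambda>z. norm (f z) * exp (c / 2 * norm z) * (1 + norm z) ^ k)" for k
    unfolding f_def using \<open>c > 0\<close> bound by (rule integrable_weighted_of_gaussian_decay[OF loc])
  have "(LINT z|lborel. f z * q z) = 0" if "zzbar_poly q" for q
    using \<open>c > 0\<close> moments that
    by (intro integral_zzbar_poly_eq_0[OF weights]) (simp_all add: f_def mult_ac)
  then have "(LINT z|lborel. f z * exp (\<i> * complex_of_real (s \<bullet> z))) = 0" for s
    using \<open>c > 0\<close> by (intro integral_zzbar_poly_character_eq_0[OF weights]) auto
  moreover have "integrable lborel f"
    using integrable_zzbar_poly_mult[OF weights _ _ zzbar_poly_one, of "\<lambda>_. 1"] \<open>c > 0\<close> by simp
  ultimately have "AE z in lborel. f z = 0"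
    by (intro fourier_transform_eq_0_imp_AE_zero)
  with nonzero show False by (simp add: f_def)
qed

end
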